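(* Let $\alpha,\beta,\gamma\in\mathbb{Z}[i]$ satisfy $\alpha^2+i\beta^2+(1+i)\gamma^2=0$, $\alpha\beta\gamma\neq0$, $\gcd(\alpha,\beta)\in U$. Then there are units $\varepsilon_1,\varepsilon_2,\varepsilon_3\in U$ such that $(X,Y,Z)=(\varepsilon_1\alpha,\varepsilon_2\beta,\varepsilon_3\gamma)$ satisfies $X^2+iY^2=(1+i)Z^2$ with $X,Y,Z\in O^I$, $\gcd(X,Y)\in U$, $XYZ\neq0$. Conversely, if $(X,Y,Z)$ satisfies $X^2+iY^2=(1+i)Z^2$, $\gcd(X,Y)\in U$, $XYZ\ne0$, then $(X,Y,iZ)$ is a solution of $X^2+iY^2+(1+i)Z^2=0$ with the same conditions.
   Context: $\mathbb{Z}[i]$ is the ring of Gaussian integers, $U=\{1,-1,i,-i\}$ its unit group; $R(\alpha),I(\alpha)$ are real and imaginary parts. $\gcd(x,y)\in U$ means no common non-unit divisor. $O=\{\alpha: R(\alpha)+I(\alpha)\equiv1\pmod 2\}$, $O^I=\{\alpha\in O: R(\alpha)\equiv 1\pmod 4\}$. *)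

theory Defs
  imports Complex_Main
begin

definition gauss_ints :: "complex set" where
  "gauss_ints = {z. Re z \<in> \<int> \<and> Im z \<in> \<int>}"

definition gunits :: "complex set" where
  "gunits = {1, -1, \<i>, -\<i>}"

definition gdvd :: "complex \<Rightarrow> complex \<Rightarrow> bool" where
  "gdvd d x \<longleftrightarrow> (\<exists>k\<in>gauss_ints. x = d * k)"

text \<open>gcd(x,y) in U: every common divisor in Z[i] is a unit.\<close>
definition gcoprime :: "complex \<Rightarrow> complex \<Rightarrow> bool" where
  "gcoprime x y \<longleftrightarrow> (\<forall>d\<in>gauss_ints. gdvd d x \<and> gdvd d y \<longrightarrow> d \<in> gunits)"

definition gO :: "complex set" where
  "gO = {z \<in> gauss_ints. (\<lfloor>Re z\<rfloor> + \<lfloor>Im z\<rfloor>) mod 2 = 1}"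

definition gOI :: "complex set" where
  "gOI = {z \<in> gO. \<lfloor>Re z\<rfloor> mod 4 = 1}"

end

theory Submission
  imports Defs
begin

text \<open>Comparing real and imaginary parts modulo 2 shows that \<alpha>, \<beta>, \<gamma> all have the same
  parity of R + I; as gcd(\<alpha>, \<beta>) is a unit, 1 + i cannot divide both \<alpha> and \<beta>, so all three
  lie in O. Every element of O has a unit multiple in O^I, and the square of an element of O^I is
  congruent to 1 modulo 4. As squares of units are \<plusminus>1, the normalised triple satisfies
  t1 X^2 + i t2 Y^2 + (1 + i) t3 Z^2 = 0 with signs t_k = \<plusminus>1, and reducing modulo 4 forces
  t2 = t1 and t3 = -t1. The converse only uses (i Z)^2 = -Z^2.\<close>

lemma gauss_intsE:
  assumes "z \<in> gauss_ints"
  obtains a b :: int where "z = Complex (of_int a) (of_int b)"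
proof -
  from assms obtain a b where "Re z = of_int a" "Im z = of_int b"
    unfolding gauss_ints_def by (auto elim!: Ints_cases)
  then show ?thesis using that by (metis complex_surj)
qed

lemma Complex_of_int_in_gauss_ints [simp]: "Complex (of_int a) (of_int b) \<in> gauss_ints"
  unfolding gauss_ints_def by auto

lemma gauss_ints_add: "x \<in> gauss_ints \<Longrightarrow> y \<in> gauss_ints \<Longrightarrow> x + y \<in> gauss_ints"
  and gauss_ints_mult: "x \<in> gauss_ints \<Longrightarrow> y \<in> gauss_ints \<Longrightarrow> x * y \<in> gauss_ints"
  and gauss_ints_uminus: "x \<in> gauss_ints \<Longrightarrow> - x \<in> gauss_ints"
  and of_int_in_gauss_ints: "of_int n \<in> gauss_ints"
  and one_in_gauss_ints: "1 \<in> gauss_ints"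
  and imaginary_unit_in_gauss_ints: "\<i> \<in> gauss_ints"
  unfolding gauss_ints_def by auto

lemma gO_Complex_iff: "Complex (of_int a) (of_int b) \<in> gO \<longleftrightarrow> odd (a + b)"
  unfolding gO_def by simp presburger

lemma gOI_Complex_iff: "Complex (of_int a) (of_int b) \<in> gOI \<longleftrightarrow> odd (a + b) \<and> a mod 4 = 1"
  unfolding gOI_def gO_def by simp presburger

lemma gunits_subset_gauss_ints: "gunits \<subseteq> gauss_ints"
  unfolding gunits_def gauss_ints_def by auto

lemma inverse_gunit: "u \<in> gunits \<Longrightarrow> inverse u \<in> gunits"
  unfolding gunits_def by auto

lemma gunit_nonzero: "u \<in> gunits \<Longrightarrow> u \<noteq> 0"
  unfolding gunits_def by auto

lemma gunit_mult_square:
  assumes "u \<in> gunits"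
  obtains t :: int where "t \<in> {1, -1}" and "\<And>z. z\<^sup>2 = of_int t * (u * z)\<^sup>2"
proof -
  have "u\<^sup>2 = of_int 1 \<or> u\<^sup>2 = of_int (-1)"
    using assms unfolding gunits_def by (auto simp: power2_eq_square)
  then obtain t :: int where t: "t \<in> {1, -1}" "u\<^sup>2 = of_int t" by blast
  have "z\<^sup>2 = of_int t * (u * z)\<^sup>2" for z
  proof -
    have "of_int t * (u * z)\<^sup>2 = (of_int t)\<^sup>2 * z\<^sup>2"
      by (simp add: power_mult_distrib t(2) power2_eq_square[of "of_int t :: complex"])
    also have "\<dots> = z\<^sup>2" using t(1) by auto
    finally show ?thesis ..
  qed
  with t(1) show ?thesis using that by blast
qed

lemma gdvd_mult_left: "gdvd d x \<Longrightarrow> w \<in> gauss_ints \<Longrightarrow> gdvd d (w * x)"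
  unfolding gdvd_def by (metis gauss_ints_mult mult.left_commute)

lemma gdvd_gunit_mult_iff:
  assumes "u \<in> gunits"
  shows "gdvd d (u * x) \<longleftrightarrow> gdvd d x"
proof
  assume "gdvd d (u * x)"
  then have "gdvd d (inverse u * (u * x))"
    using assms gunits_subset_gauss_ints inverse_gunit by (blast intro: gdvd_mult_left)
  then show "gdvd d x" using gunit_nonzero[OF assms] by (simp add: mult.assoc[symmetric])
qed (use assms gunits_subset_gauss_ints gdvd_mult_left in blast)

lemma gcoprime_gunit_mult:
  "gcoprime x y \<Longrightarrow> u \<in> gunits \<Longrightarrow> v \<in> gunits \<Longrightarrow> gcoprime (u * x) (v * y)"
  unfolding gcoprime_def by (simp add: gdvd_gunit_mult_iff)

lemma one_plus_i_gdvd: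
  assumes "even (a + b)"
  shows "gdvd (1 + \<i>) (Complex (of_int a) (of_int b))"
proof -
  obtain p where "a + b = 2 * p" using assms by blast
  then have "Complex (of_int a) (of_int b) = (1 + \<i>) * Complex (of_int p) (of_int (p - a))"
    by (simp add: complex_eq_iff)
  then show ?thesis unfolding gdvd_def by (metis Complex_of_int_in_gauss_ints)
qed

lemma not_gcoprime_outside_gO:
  assumes "x \<in> gauss_ints - gO" "y \<in> gauss_ints - gO"
  shows "\<not> gcoprime x y"
proof -
  obtain a b where x: "x = Complex (of_int a) (of_int b)" using assms(1) by (blast elim: gauss_intsE)
  obtain c d where y: "y = Complex (of_int c) (of_int d)" using assms(2) by (blast elim: gauss_intsE)
  have "gdvd (1 + \<i>) x" "gdvd (1 + \<i>) y"
    using assms one_plus_i_gdvd[of a b] one_plus_i_gdvd[of c d] by (auto simp: x y gO_Complex_iff)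
  moreover have "1 + \<i> \<in> gauss_ints - gunits"
    by (auto simp: gauss_ints_def gunits_def complex_eq_iff)
  ultimately show ?thesis unfolding gcoprime_def by blast
qed

lemma solution_gO_iff:
  assumes "\<alpha> \<in> gauss_ints" "\<beta> \<in> gauss_ints" "\<gamma> \<in> gauss_ints"
    and eq: "\<alpha>\<^sup>2 + \<i> * \<beta>\<^sup>2 + (1 + \<i>) * \<gamma>\<^sup>2 = 0"
  shows "\<alpha> \<in> gO \<longleftrightarrow> \<gamma> \<in> gO" and "\<beta> \<in> gO \<longleftrightarrow> \<gamma> \<in> gO"
proof -
  obtain a1 a2 where \<alpha>: "\<alpha> = Complex (of_int a1) (of_int a2)" using assms(1) by (rule gauss_intsE)
  obtain b1 b2 where \<beta>: "\<beta> = Complex (of_int b1) (of_int b2)" using assms(2) by (rule gauss_intsE)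
  obtain c1 c2 where \<gamma>: "\<gamma> = Complex (of_int c1) (of_int c2)" using assms(3) by (rule gauss_intsE)
  have "of_int (a1*a1 - a2*a2 - 2*b1*b2 + c1*c1 - c2*c2 - 2*c1*c2) = (0::real)"
    using arg_cong[OF eq, of Re] unfolding \<alpha> \<beta> \<gamma> by (simp add: power2_eq_square algebra_simps)
  moreover have "of_int (2*a1*a2 + b1*b1 - b2*b2 + c1*c1 - c2*c2 + 2*c1*c2) = (0::real)"
    using arg_cong[OF eq, of Im] unfolding \<alpha> \<beta> \<gamma> by (simp add: power2_eq_square algebra_simps)
  ultimately have "even (a1*a1 - a2*a2 - 2*b1*b2 + c1*c1 - c2*c2 - 2*c1*c2)"
    and "even (2*a1*a2 + b1*b1 - b2*b2 + c1*c1 - c2*c2 + 2*c1*c2)"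
    unfolding of_int_eq_0_iff by simp_all
  \<comment> \<open>modulo 2, Re (z^2) is congruent to Re z + Im z and Im (z^2) is even\<close>
  then have "even (a1 + a2) \<longleftrightarrow> even (c1 + c2)" "even (b1 + b2) \<longleftrightarrow> even (c1 + c2)"
    by simp_all blast+
  then show "\<alpha> \<in> gO \<longleftrightarrow> \<gamma> \<in> gO" "\<beta> \<in> gO \<longleftrightarrow> \<gamma> \<in> gO"
    unfolding \<alpha> \<beta> \<gamma> gO_Complex_iff by blast+
qed

lemma gO_gunit_multiple_in_gOI:
  assumes "z \<in> gO"
  shows "\<exists>e\<in>gunits. e * z \<in> gOI"
proof -
  obtain a b where z: "z = Complex (of_int a) (of_int b)"
    using assms unfolding gO_def by (blast elim: gauss_intsE)
  have odd: "odd (a + b)" using assms unfolding z gO_Complex_iff .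
  have units: "1 \<in> gunits" "-1 \<in> gunits" "\<i> \<in> gunits" "-\<i> \<in> gunits"
    unfolding gunits_def by auto
  have "a mod 4 = 1 \<or> a mod 4 = 3 \<or> b mod 4 = 1 \<or> b mod 4 = 3"
    using odd by presburger
  then consider "a mod 4 = 1" | "a mod 4 = 3" | "b mod 4 = 1" | "b mod 4 = 3" by blast
  then show ?thesis
  proof cases
    case 1
    then have "1 * z \<in> gOI" using odd by (simp add: z gOI_Complex_iff)
    then show ?thesis using units by blast
  next
    case 2
    have unit_mult: "-1 * z = Complex (of_int (-a)) (of_int (-b))" by (simp add: z complex_eq_iff)
    have "-1 * z \<in> gOI" unfolding unit_mult gOI_Complex_iff using odd 2 by presburger
    then show ?thesis using units by blast
  next
    case 3
    have unit_mult: "-\<i> * z = Complex (of_int b) (of_int (-a))" by (simp add: z complex_eq_iff)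
    have "-\<i> * z \<in> gOI" unfolding unit_mult gOI_Complex_iff using odd 3 by presburger
    then show ?thesis using units by blast
  next
    case 4
    have unit_mult: "\<i> * z = Complex (of_int (-b)) (of_int a)" by (simp add: z complex_eq_iff)
    have "\<i> * z \<in> gOI" unfolding unit_mult gOI_Complex_iff using odd 4 by presburger
    then show ?thesis using units by blast
  qed
qed

lemma gOI_square:
  assumes "z \<in> gOI"
  shows "\<exists>w\<in>gauss_ints. z\<^sup>2 = 1 + 4 * w"
proof -
  obtain a b where z: "z = Complex (of_int a) (of_int b)"
    using assms unfolding gOI_def gO_def by (blast elim: gauss_intsE)
  have "odd (a + b)" "a mod 4 = 1" using assms unfolding z gOI_Complex_iff by auto
  then have "a = 4 * (a div 4) + 1" "even b" by presburger+
  then obtain q r where a: "a = 4 * q + 1" and b: "b = 2 * r" by blast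
  have "z\<^sup>2 = Complex (of_int (a * a - b * b)) (of_int (2 * a * b))"
    unfolding z by (simp add: complex_eq_iff power2_eq_square)
  also have "\<dots> = 1 + 4 * Complex (of_int (4*q*q + 2*q - r*r)) (of_int (r * a))"
    unfolding complex_eq_iff by (simp add: a b algebra_simps)
  finally show ?thesis using Complex_of_int_in_gauss_ints by blast
qed

lemma gdvd_of_int_Complex:
  assumes "gdvd (of_int n) (Complex (of_int a) (of_int b))"
  shows "n dvd a \<and> n dvd b"
proof -
  obtain k where "k \<in> gauss_ints" and k: "Complex (of_int a) (of_int b) = of_int n * k"
    using assms unfolding gdvd_def by blast
  then obtain p q :: int where "k = Complex (of_int p) (of_int q)" by (blast elim: gauss_intsE)
  with k have "a = n * p \<and> b = n * q"
    by (simp add: complex_eq_iff flip: of_int_mult)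
  then show ?thesis by simp
qed

lemma signs_of_4_gdvd:
  fixes t1 t2 t3 :: int
  assumes "t1 \<in> {1, -1}" "t2 \<in> {1, -1}" "t3 \<in> {1, -1}"
    and "gdvd 4 (of_int t1 + \<i> * of_int t2 + (1 + \<i>) * of_int t3)"
  shows "t2 = t1 \<and> t3 = - t1"
proof -
  have "of_int t1 + \<i> * of_int t2 + (1 + \<i>) * of_int t3 = Complex (of_int (t1 + t3)) (of_int (t2 + t3))"
    by (simp add: complex_eq_iff)
  then have "4 dvd t1 + t3 \<and> 4 dvd t2 + t3"
    using gdvd_of_int_Complex[of 4 "t1 + t3" "t2 + t3"] assms(4) by simp
  then show ?thesis using assms(1-3) by auto
qed

lemma signed_solution_1_mod_4:
  fixes A B C a b c :: complex and t1 t2 t3 :: int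
  assumes t: "t1 \<in> {1, -1}" "t2 \<in> {1, -1}" "t3 \<in> {1, -1}"
    and abc: "a \<in> gauss_ints" "b \<in> gauss_ints" "c \<in> gauss_ints"
    and A: "A = 1 + 4 * a" and B: "B = 1 + 4 * b" and C: "C = 1 + 4 * c"
    and eq: "of_int t1 * A + \<i> * (of_int t2 * B) + (1 + \<i>) * (of_int t3 * C) = 0"
  shows "A + \<i> * B = (1 + \<i>) * C"
proof -
  define w where "w = - (of_int t1 * a + \<i> * (of_int t2 * b) + (1 + \<i>) * (of_int t3 * c))"
  have w: "w \<in> gauss_ints"
    unfolding w_def
    by (intro gauss_ints_uminus gauss_ints_add gauss_ints_mult of_int_in_gauss_ints
        one_in_gauss_ints imaginary_unit_in_gauss_ints abc)
  have "of_int t1 * A + \<i> * (of_int t2 * B) + (1 + \<i>) * (of_int t3 * C)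
      = of_int t1 + \<i> * of_int t2 + (1 + \<i>) * of_int t3 - 4 * w"
    unfolding w_def A B C by (simp add: algebra_simps)
  with eq have "of_int t1 + \<i> * of_int t2 + (1 + \<i>) * of_int t3 = 4 * w"
    by simp
  with w have "gdvd 4 (of_int t1 + \<i> * of_int t2 + (1 + \<i>) * of_int t3)"
    unfolding gdvd_def by blast
  then have "t2 = t1" "t3 = - t1" using signs_of_4_gdvd[OF t] by simp_all
  with eq have "of_int t1 * (A + \<i> * B - (1 + \<i>) * C) = 0"
    by (simp add: algebra_simps)
  then show ?thesis using t by auto
qed

lemma normalized_solution:
  assumes "\<alpha> \<in> gauss_ints" "\<beta> \<in> gauss_ints" "\<gamma> \<in> gauss_ints"
    and eq: "\<alpha>\<^sup>2 + \<i> * \<beta>\<^sup>2 + (1 + \<i>) * \<gamma>\<^sup>2 = 0"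
    and nonzero: "\<alpha> * \<beta> * \<gamma> \<noteq> 0" and coprime: "gcoprime \<alpha> \<beta>"
  shows "\<exists>\<epsilon>1\<in>gunits. \<exists>\<epsilon>2\<in>gunits. \<exists>\<epsilon>3\<in>gunits.
           (\<epsilon>1 * \<alpha>)\<^sup>2 + \<i> * (\<epsilon>2 * \<beta>)\<^sup>2 = (1 + \<i>) * (\<epsilon>3 * \<gamma>)\<^sup>2 \<and>
           \<epsilon>1 * \<alpha> \<in> gOI \<and> \<epsilon>2 * \<beta> \<in> gOI \<and> \<epsilon>3 * \<gamma> \<in> gOI \<and>
           gcoprime (\<epsilon>1 * \<alpha>) (\<epsilon>2 * \<beta>) \<and>
           (\<epsilon>1 * \<alpha>) * (\<epsilon>2 * \<beta>) * (\<epsilon>3 * \<gamma>) \<noteq> 0"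
proof -
  have "\<alpha> \<in> gO" "\<beta> \<in> gO" "\<gamma> \<in> gO"
    using solution_gO_iff[OF assms(1-4)] not_gcoprime_outside_gO coprime assms(1,2) by blast+
  then obtain e1 e2 e3 where e: "e1 \<in> gunits" "e2 \<in> gunits" "e3 \<in> gunits"
    and OI: "e1 * \<alpha> \<in> gOI" "e2 * \<beta> \<in> gOI" "e3 * \<gamma> \<in> gOI"
    using gO_gunit_multiple_in_gOI by meson
  obtain w1 w2 w3 where w: "w1 \<in> gauss_ints" "w2 \<in> gauss_ints" "w3 \<in> gauss_ints"
    and "(e1 * \<alpha>)\<^sup>2 = 1 + 4 * w1" "(e2 * \<beta>)\<^sup>2 = 1 + 4 * w2" "(e3 * \<gamma>)\<^sup>2 = 1 + 4 * w3"
    using gOI_square[OF OI(1)] gOI_square[OF OI(2)] gOI_square[OF OI(3)] by blast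
  moreover obtain t1 t2 t3 :: int where t: "t1 \<in> {1, -1}" "t2 \<in> {1, -1}" "t3 \<in> {1, -1}"
    and "\<alpha>\<^sup>2 = of_int t1 * (e1 * \<alpha>)\<^sup>2" "\<beta>\<^sup>2 = of_int t2 * (e2 * \<beta>)\<^sup>2"
    "\<gamma>\<^sup>2 = of_int t3 * (e3 * \<gamma>)\<^sup>2"
    using gunit_mult_square[OF e(1)] gunit_mult_square[OF e(2)] gunit_mult_square[OF e(3)] by metis
  ultimately have "(e1 * \<alpha>)\<^sup>2 + \<i> * (e2 * \<beta>)\<^sup>2 = (1 + \<i>) * (e3 * \<gamma>)\<^sup>2"
    using eq by (intro signed_solution_1_mod_4[OF t w]) simp_all
  moreover have "gcoprime (e1 * \<alpha>) (e2 * \<beta>)"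
    using gcoprime_gunit_mult[OF coprime e(1,2)] .
  moreover have "(e1 * \<alpha>) * (e2 * \<beta>) * (e3 * \<gamma>) \<noteq> 0"
    using nonzero gunit_nonzero[OF e(1)] gunit_nonzero[OF e(2)] gunit_nonzero[OF e(3)] by simp
  ultimately show ?thesis using e OI by blast
qed

theorem theorem4p18:
  shows "(\<forall>\<alpha>\<in>gauss_ints. \<forall>\<beta>\<in>gauss_ints. \<forall>\<gamma>\<in>gauss_ints.
            \<alpha>\<^sup>2 + \<i> * \<beta>\<^sup>2 + (1 + \<i>) * \<gamma>\<^sup>2 = 0 \<and> \<alpha> * \<beta> * \<gamma> \<noteq> 0 \<and> gcoprime \<alpha> \<beta> \<longrightarrow>
            (\<exists>\<epsilon>1\<in>gunits. \<exists>\<epsilon>2\<in>gunits. \<exists>\<epsilon>3\<in>gunits.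
               (\<epsilon>1 * \<alpha>)\<^sup>2 + \<i> * (\<epsilon>2 * \<beta>)\<^sup>2 = (1 + \<i>) * (\<epsilon>3 * \<gamma>)\<^sup>2 \<and>
               \<epsilon>1 * \<alpha> \<in> gOI \<and> \<epsilon>2 * \<beta> \<in> gOI \<and> \<epsilon>3 * \<gamma> \<in> gOI \<and>
               gcoprime (\<epsilon>1 * \<alpha>) (\<epsilon>2 * \<beta>) \<and>
               (\<epsilon>1 * \<alpha>) * (\<epsilon>2 * \<beta>) * (\<epsilon>3 * \<gamma>) \<noteq> 0))
       \<and>
       (\<forall>X\<in>gauss_ints. \<forall>Y\<in>gauss_ints. \<forall>Z\<in>gauss_ints.
            X\<^sup>2 + \<i> * Y\<^sup>2 = (1 + \<i>) * Z\<^sup>2 \<and> gcoprime X Y \<and> X * Y * Z \<noteq> 0 \<longrightarrow>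
            X\<^sup>2 + \<i> * Y\<^sup>2 + (1 + \<i>) * (\<i> * Z)\<^sup>2 = 0 \<and> gcoprime X Y \<and> X * Y * (\<i> * Z) \<noteq> 0)"
    (is "?normal_form \<and> ?converse")
proof
  show ?normal_form using normalized_solution by blast
  have "(\<i> * Z)\<^sup>2 = - Z\<^sup>2" for Z :: complex by (simp add: power_mult_distrib)
  then show ?converse by simp
qed

end
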